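(* Let $k,t\ge0$ be integers. Then for every $\theta\in\mathbb{R}$, \[ \Big|\frac{d^k}{d\theta^k}P_t(e^{i\theta})\Big|,\ \Big|\frac{d^k}{d\theta^k}Q_t(e^{i\theta})\Big|\le 2^{kt+(t+1)/2}. \] In particular, with $T=2^{t+10}$ and $\alpha,\beta$ as in the context, $|\alpha^{(k)}(x)|,|\beta^{(k)}(x)|\le 2^{-10k}$ for every integer $k\ge1$ and every $x\in\mathbb{R}$.
   Context: Rudin–Shapiro polynomials: $P_0(z)=Q_0(z)=1$ and for $s\ge0$, $P_{s+1}(z)=P_s(z)+z^{2^s}Q_s(z)$, $Q_{s+1}(z)=P_s(z)-z^{2^s}Q_s(z)$. For the integer $t$, set $T:=2^{t+10}$ and for $x\in\mathbb{R}$ define $\alpha(x):=2^{-(t+1)/2}P_t(e^{ix/T})$ and $\beta(x):=2^{-(t+1)/2}Q_t(e^{ix/T})$. *)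

theory Defs
  imports "HOL-Analysis.Analysis"
begin

fun RSP :: "nat \<Rightarrow> complex \<Rightarrow> complex" and RSQ :: "nat \<Rightarrow> complex \<Rightarrow> complex" where
  "RSP 0 z = 1"
| "RSQ 0 z = 1"
| "RSP (Suc s) z = RSP s z + z ^ (2 ^ s) * RSQ s z"
| "RSQ (Suc s) z = RSP s z - z ^ (2 ^ s) * RSQ s z"

definition rderiv_iter :: "nat \<Rightarrow> (real \<Rightarrow> complex) \<Rightarrow> real \<Rightarrow> complex" where
  "rderiv_iter k f = ((\<lambda>g x. vector_derivative g (at x)) ^^ k) f"

definition RS_T :: "nat \<Rightarrow> real" where
  "RS_T t = 2 ^ (t + 10)"

definition RS_alpha :: "nat \<Rightarrow> real \<Rightarrow> complex" where
  "RS_alpha t x = complex_of_real (2 powr (- (real t + 1) / 2)) * RSP t (exp (\<i> * complex_of_real (x / RS_T t)))"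

definition RS_beta :: "nat \<Rightarrow> real \<Rightarrow> complex" where
  "RS_beta t x = complex_of_real (2 powr (- (real t + 1) / 2)) * RSQ t (exp (\<i> * complex_of_real (x / RS_T t)))"

end

(* For fixed k, the k-th derivatives F_t and G_t of P_t(e^(i theta)) and Q_t(e^(i theta)) are
   exponential sums, and the recursion gives F_(t+1) = F_t + H_t and G_(t+1) = F_t - H_t, where H_t
   is the k-th derivative of e^(i 2^t theta) Q_t(e^(i theta)).  By the Leibniz rule H_t is G_t up to
   an error bounded by sum_(j<k) (k choose j) 2^(t(k-j)) |Q_t^(j)|, which the induction hypothesis
   bounds by (2^k - 1) M_t, with M_t^2 = 2^(2kt+t+1) the bound on |F_t|^2 + |G_t|^2.  The
   parallelogram law then gives |F_(t+1)|^2 + |G_(t+1)|^2 <= 2 (2^k M_t)^2 = M_(t+1)^2.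
   The bounds on alpha and beta follow by rescaling theta = x / T. *)
theory Submission
  imports Defs
begin

definition exp_sum :: "'a set \<Rightarrow> ('a \<Rightarrow> complex) \<Rightarrow> ('a \<Rightarrow> real) \<Rightarrow> real \<Rightarrow> complex" where
  "exp_sum A c w \<theta> = (\<Sum>n\<in>A. c n * exp (\<i> * of_real (w n) * of_real \<theta>))"

lemma has_vector_derivative_exp_sum:
  "(exp_sum A c w has_vector_derivative exp_sum A (\<lambda>n. c n * (\<i> * of_real (w n))) w \<theta>) (at \<theta>)"
proof -
  have "((\<lambda>z. c n * exp (\<i> * of_real (w n) * z)) has_field_derivative
          c n * (\<i> * of_real (w n)) * exp (\<i> * of_real (w n) * of_real \<theta>)) (at (of_real \<theta>))" for n
    by (auto intro!: derivative_eq_intros)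
  from has_vector_derivative_real_field[OF this]
  have "((\<lambda>\<theta>. c n * exp (\<i> * of_real (w n) * of_real \<theta>)) has_vector_derivative
          c n * (\<i> * of_real (w n)) * exp (\<i> * of_real (w n) * of_real \<theta>)) (at \<theta>)" for n
    by simp
  then show ?thesis
    unfolding exp_sum_def by (rule has_vector_derivative_sum)
qed

lemma rderiv_iter_exp_sum:
  "rderiv_iter k (exp_sum A c w) = exp_sum A (\<lambda>n. c n * (\<i> * of_real (w n)) ^ k) w"
proof (induction k)
  case 0
  show ?case by (simp add: rderiv_iter_def)
next
  case (Suc k)
  have "rderiv_iter (Suc k) (exp_sum A c w) = (\<lambda>\<theta>. vector_derivative (rderiv_iter k (exp_sum A c w)) (at \<theta>))"
    by (simp add: rderiv_iter_def)
  also have "\<dots> = exp_sum A (\<lambda>n. c n * (\<i> * of_real (w n)) ^ Suc k) w"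
    unfolding Suc
    by (rule ext, rule vector_derivative_at, rule has_vector_derivative_exp_sum[THEN has_vector_derivative_eq_rhs])
       (simp add: exp_sum_def mult_ac)
  finally show ?case .
qed

lemma sum_lessThan_add:
  fixes m n :: nat
  shows "(\<Sum>i<m + n. f i) = (\<Sum>i<m. f i) + (\<Sum>i<n. f (m + i))"
  by (induction n) (auto simp: add_ac)

lemma exp_sum_lessThan_add:
  fixes m n :: nat
  shows "exp_sum {..<m + n} c w \<theta> =
    exp_sum {..<m} c w \<theta> + exp_sum {..<n} (\<lambda>i. c (m + i)) (\<lambda>i. w (m + i)) \<theta>"
  unfolding exp_sum_def by (rule sum_lessThan_add)

lemma exp_sum_shift_Leibniz:
  "exp_sum A (\<lambda>n. c n * (\<i> * of_real (a + w n)) ^ k) (\<lambda>n. a + w n) \<theta> =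
     exp (\<i> * of_real (a * \<theta>)) *
       (\<Sum>j\<le>k. of_nat (k choose j) * (\<i> * of_real a) ^ (k - j) * exp_sum A (\<lambda>n. c n * (\<i> * of_real (w n)) ^ j) w \<theta>)"
proof -
  have binomial: "(\<i> * of_real (a + w n)) ^ k =
      (\<Sum>j\<le>k. of_nat (k choose j) * (\<i> * of_real (w n)) ^ j * (\<i> * of_real a) ^ (k - j))" for n
    by (subst binomial_ring[symmetric]) (simp add: algebra_simps)
  have exp_split: "exp (\<i> * of_real (a + w n) * of_real \<theta>) =
      exp (\<i> * of_real (a * \<theta>)) * exp (\<i> * of_real (w n) * of_real \<theta>)" for n
    by (simp add: exp_add[symmetric] algebra_simps)
  show ?thesis
    unfolding exp_sum_def binomial exp_split sum_distrib_left sum_distrib_right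
    by (subst sum.swap) (auto intro!: sum.cong simp: mult_ac)
qed

lemma exp_sum_scale:
  "exp_sum A (\<lambda>n. C * c n * (\<i> * of_real (w n / T)) ^ k) (\<lambda>n. w n / T) x =
     C / of_real T ^ k * exp_sum A (\<lambda>n. c n * (\<i> * of_real (w n)) ^ k) w (x / T)"
  unfolding exp_sum_def sum_distrib_left
  by (rule sum.cong) (simp_all add: power_mult_distrib power_divide mult_ac)

lemma parallelogram_law:
  fixes x y :: "'a :: real_inner"
  shows "(norm (x + y))\<^sup>2 + (norm (x - y))\<^sup>2 = 2 * ((norm x)\<^sup>2 + (norm y)\<^sup>2)"
  by (simp add: power2_norm_eq_inner inner_add inner_diff inner_commute)

lemma norm_le_of_sum_squares_le:
  fixes x y :: "'a :: real_normed_vector"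
  assumes "(norm x)\<^sup>2 + (norm y)\<^sup>2 \<le> M\<^sup>2" and "0 \<le> M"
  shows "norm x \<le> M" and "norm y \<le> M"
proof -
  have "(norm x)\<^sup>2 \<le> M\<^sup>2" and "(norm y)\<^sup>2 \<le> M\<^sup>2"
    using assms(1) zero_le_power2[of "norm x"] zero_le_power2[of "norm y"] by linarith+
  then show "norm x \<le> M" and "norm y \<le> M"
    using \<open>0 \<le> M\<close> by (auto intro: power2_le_imp_le)
qed

lemma parallelogram_bound:
  fixes f g h :: "'a :: real_inner"
  assumes fg: "(norm f)\<^sup>2 + (norm g)\<^sup>2 \<le> M\<^sup>2" and h: "norm h \<le> norm g + r" and "0 \<le> r" "0 \<le> M"
  shows "(norm (f + h))\<^sup>2 + (norm (f - h))\<^sup>2 \<le> 2 * (M + r)\<^sup>2"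
proof -
  have "norm g \<le> M"
    using fg \<open>0 \<le> M\<close> by (rule norm_le_of_sum_squares_le)
  have "(norm h)\<^sup>2 \<le> (norm g + r)\<^sup>2"
    using h by (intro power_mono) auto
  also have "\<dots> \<le> (norm g)\<^sup>2 + 2 * M * r + r\<^sup>2"
    using mult_right_mono[OF \<open>norm g \<le> M\<close> \<open>0 \<le> r\<close>] by (simp add: power2_sum)
  finally have "(norm f)\<^sup>2 + (norm h)\<^sup>2 \<le> (M + r)\<^sup>2"
    using fg by (simp add: power2_sum)
  then show ?thesis
    by (simp add: parallelogram_law)
qed

fun RSP_coeff :: "nat \<Rightarrow> nat \<Rightarrow> complex" and RSQ_coeff :: "nat \<Rightarrow> nat \<Rightarrow> complex" where
  "RSP_coeff 0 n = (if n = 0 then 1 else 0)"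
| "RSQ_coeff 0 n = (if n = 0 then 1 else 0)"
| "RSP_coeff (Suc s) n = (if n < 2 ^ s then RSP_coeff s n else RSQ_coeff s (n - 2 ^ s))"
| "RSQ_coeff (Suc s) n = (if n < 2 ^ s then RSP_coeff s n else - RSQ_coeff s (n - 2 ^ s))"

lemma RSP_eq_coeff_sum: "RSP t z = (\<Sum>n<2 ^ t. RSP_coeff t n * z ^ n)"
  and RSQ_eq_coeff_sum: "RSQ t z = (\<Sum>n<2 ^ t. RSQ_coeff t n * z ^ n)"
proof -
  have "RSP t z = (\<Sum>n<2 ^ t. RSP_coeff t n * z ^ n) \<and> RSQ t z = (\<Sum>n<2 ^ t. RSQ_coeff t n * z ^ n)"
  proof (induction t)
    case 0
    show ?case by simp
  next
    case (Suc s)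
    have two_pow: "(2::nat) ^ Suc s = 2 ^ s + 2 ^ s" by simp
    show ?case
      unfolding two_pow sum_lessThan_add using Suc by (simp add: power_add sum_distrib_left sum_negf mult_ac)
  qed
  then show "RSP t z = (\<Sum>n<2 ^ t. RSP_coeff t n * z ^ n)" "RSQ t z = (\<Sum>n<2 ^ t. RSQ_coeff t n * z ^ n)"
    by auto
qed

definition RSP_deriv :: "nat \<Rightarrow> nat \<Rightarrow> real \<Rightarrow> complex" where
  "RSP_deriv t k = exp_sum {..<2 ^ t} (\<lambda>n. RSP_coeff t n * (\<i> * of_nat n) ^ k) real"

definition RSQ_deriv :: "nat \<Rightarrow> nat \<Rightarrow> real \<Rightarrow> complex" where
  "RSQ_deriv t k = exp_sum {..<2 ^ t} (\<lambda>n. RSQ_coeff t n * (\<i> * of_nat n) ^ k) real"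

lemma rderiv_iter_RSP_scaled:
  "rderiv_iter k (\<lambda>x. C * RSP t (exp (\<i> * of_real (x / T)))) x = C / of_real T ^ k * RSP_deriv t k (x / T)"
proof -
  have "(\<lambda>x. C * RSP t (exp (\<i> * of_real (x / T)))) = exp_sum {..<2 ^ t} (\<lambda>n. C * RSP_coeff t n) (\<lambda>n. real n / T)"
    by (auto simp: exp_sum_def RSP_eq_coeff_sum sum_distrib_left exp_of_nat_mult[symmetric] mult_ac)
  then show ?thesis
    using exp_sum_scale[where w = real] by (simp add: rderiv_iter_exp_sum RSP_deriv_def)
qed

lemma rderiv_iter_RSQ_scaled:
  "rderiv_iter k (\<lambda>x. C * RSQ t (exp (\<i> * of_real (x / T)))) x = C / of_real T ^ k * RSQ_deriv t k (x / T)"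
proof -
  have "(\<lambda>x. C * RSQ t (exp (\<i> * of_real (x / T)))) = exp_sum {..<2 ^ t} (\<lambda>n. C * RSQ_coeff t n) (\<lambda>n. real n / T)"
    by (auto simp: exp_sum_def RSQ_eq_coeff_sum sum_distrib_left exp_of_nat_mult[symmetric] mult_ac)
  then show ?thesis
    using exp_sum_scale[where w = real] by (simp add: rderiv_iter_exp_sum RSQ_deriv_def)
qed

lemma rderiv_iter_RSP_circle: "rderiv_iter k (\<lambda>\<theta>. RSP t (exp (\<i> * of_real \<theta>))) \<theta> = RSP_deriv t k \<theta>"
  using rderiv_iter_RSP_scaled[where C = 1 and T = 1] by simp

lemma rderiv_iter_RSQ_circle: "rderiv_iter k (\<lambda>\<theta>. RSQ t (exp (\<i> * of_real \<theta>))) \<theta> = RSQ_deriv t k \<theta>"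
  using rderiv_iter_RSQ_scaled[where C = 1 and T = 1] by simp

text \<open>The k-th derivative of e^(i 2^t theta) Q_t(e^(i theta)), expanded by the Leibniz rule.\<close>
definition RSQ_shifted_deriv :: "nat \<Rightarrow> nat \<Rightarrow> real \<Rightarrow> complex" where
  "RSQ_shifted_deriv t k \<theta> = exp (\<i> * of_real (2 ^ t * \<theta>)) *
     (\<Sum>j\<le>k. of_nat (k choose j) * (\<i> * 2 ^ t) ^ (k - j) * RSQ_deriv t j \<theta>)"

lemma exp_sum_RSQ_shifted:
  "exp_sum {..<2 ^ t} (\<lambda>n. RSQ_coeff t n * (\<i> * of_nat (2 ^ t + n)) ^ k) (\<lambda>n. real (2 ^ t + n)) \<theta>
     = RSQ_shifted_deriv t k \<theta>"
  using exp_sum_shift_Leibniz[where A = "{..<2 ^ t}" and c = "RSQ_coeff t" and a = "2 ^ t" and w = real]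
  by (simp add: RSQ_shifted_deriv_def RSQ_deriv_def)

lemma RSP_deriv_Suc: "RSP_deriv (Suc t) k \<theta> = RSP_deriv t k \<theta> + RSQ_shifted_deriv t k \<theta>"
  and RSQ_deriv_Suc: "RSQ_deriv (Suc t) k \<theta> = RSP_deriv t k \<theta> - RSQ_shifted_deriv t k \<theta>"
proof -
  have two_pow: "(2::nat) ^ Suc t = 2 ^ t + 2 ^ t" by simp
  show "RSP_deriv (Suc t) k \<theta> = RSP_deriv t k \<theta> + RSQ_shifted_deriv t k \<theta>"
    "RSQ_deriv (Suc t) k \<theta> = RSP_deriv t k \<theta> - RSQ_shifted_deriv t k \<theta>"
    unfolding RSP_deriv_def RSQ_deriv_def two_pow exp_sum_lessThan_add exp_sum_RSQ_shifted[symmetric]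
    by (simp_all add: exp_sum_def sum_negf)
qed

lemma norm_RSQ_shifted_deriv_le:
  "cmod (RSQ_shifted_deriv t k \<theta>) \<le>
     cmod (RSQ_deriv t k \<theta>) + (\<Sum>j<k. (k choose j) * (2 ^ t) ^ (k - j) * cmod (RSQ_deriv t j \<theta>))"
proof -
  have "cmod (RSQ_shifted_deriv t k \<theta>) =
      cmod (RSQ_deriv t k \<theta> + (\<Sum>j<k. of_nat (k choose j) * (\<i> * 2 ^ t) ^ (k - j) * RSQ_deriv t j \<theta>))"
    unfolding RSQ_shifted_deriv_def norm_mult by (simp add: add.commute flip: lessThan_Suc_atMost)
  also have "\<dots> \<le> cmod (RSQ_deriv t k \<theta>) + (\<Sum>j<k. cmod (of_nat (k choose j) * (\<i> * 2 ^ t) ^ (k - j) * RSQ_deriv t j \<theta>))"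
    by (intro norm_triangle_le add_left_mono norm_sum)
  also have "\<dots> = cmod (RSQ_deriv t k \<theta>) + (\<Sum>j<k. (k choose j) * (2 ^ t) ^ (k - j) * cmod (RSQ_deriv t j \<theta>))"
    by (simp add: norm_mult norm_power)
  finally show ?thesis .
qed

definition RS_bound :: "nat \<Rightarrow> nat \<Rightarrow> real" where
  "RS_bound t k = 2 powr (real k * real t + (real t + 1) / 2)"

lemma RS_bound_square: "(RS_bound t k)\<^sup>2 = 2 ^ (2 * k * t + t + 1)"
proof -
  have "(RS_bound t k)\<^sup>2 = 2 powr (real k * real t + (real t + 1) / 2) * 2 powr (real k * real t + (real t + 1) / 2)"
    by (simp add: RS_bound_def power2_eq_square)
  also have "\<dots> = 2 powr real (2 * k * t + t + 1)"
    by (simp add: powr_add[symmetric] algebra_simps)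
  also have "\<dots> = 2 ^ (2 * k * t + t + 1)"
    by (rule powr_realpow) simp
  finally show ?thesis .
qed

lemma RS_bound_shift: "j \<le> k \<Longrightarrow> (2 ^ t) ^ (k - j) * RS_bound t j = RS_bound t k"
  unfolding RS_bound_def
  by (simp add: powr_realpow[symmetric] powr_powr powr_add[symmetric] of_nat_diff algebra_simps)

lemma RS_bound_Suc: "(RS_bound (Suc t) k)\<^sup>2 = 2 * (2 ^ k * RS_bound t k)\<^sup>2"
  unfolding power_mult_distrib[of "2 ^ k"] RS_bound_square
  by (simp add: power_add flip: power_mult)

lemma sum_binomial_lessThan: "(\<Sum>j<k. real (k choose j)) = 2 ^ k - 1"
proof -
  have "(\<Sum>j\<le>k. real (k choose j)) = 2 ^ k"
    using choose_row_sum[of k] by (metis of_nat_numeral of_nat_power of_nat_sum)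
  then show ?thesis
    by (simp flip: lessThan_Suc_atMost)
qed

lemma RS_deriv_energy:
  "(cmod (RSP_deriv t k \<theta>))\<^sup>2 + (cmod (RSQ_deriv t k \<theta>))\<^sup>2 \<le> (RS_bound t k)\<^sup>2"
proof (induction t arbitrary: k \<theta>)
  case 0
  show ?case
    by (simp add: RSP_deriv_def RSQ_deriv_def exp_sum_def RS_bound_square power_0_left)
next
  case (Suc t)
  have RSQ_le: "cmod (RSQ_deriv t j \<theta>) \<le> RS_bound t j" for j
    using Suc[of j \<theta>] by (rule norm_le_of_sum_squares_le) (simp add: RS_bound_def)
  define r where "r = (\<Sum>j<k. (k choose j) * (2 ^ t) ^ (k - j) * RS_bound t j)"
  have "r = (\<Sum>j<k. real (k choose j)) * RS_bound t k"
    unfolding r_def sum_distrib_right by (intro sum.cong) (simp_all add: RS_bound_shift mult.assoc)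
  then have r_eq: "RS_bound t k + r = 2 ^ k * RS_bound t k"
    by (simp add: sum_binomial_lessThan algebra_simps)
  have "cmod (RSQ_shifted_deriv t k \<theta>) \<le> cmod (RSQ_deriv t k \<theta>) + r"
    unfolding r_def
    by (rule order_trans[OF norm_RSQ_shifted_deriv_le]) (intro add_left_mono sum_mono mult_left_mono RSQ_le; simp)
  then have "(cmod (RSP_deriv (Suc t) k \<theta>))\<^sup>2 + (cmod (RSQ_deriv (Suc t) k \<theta>))\<^sup>2 \<le> 2 * (RS_bound t k + r)\<^sup>2"
    unfolding RSP_deriv_Suc RSQ_deriv_Suc
    by (rule parallelogram_bound[OF Suc]) (auto simp: r_def RS_bound_def intro!: sum_nonneg)
  then show ?case
    by (simp add: r_eq RS_bound_Suc)
qed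

lemma norm_RSP_deriv_le: "cmod (RSP_deriv t k \<theta>) \<le> RS_bound t k"
  and norm_RSQ_deriv_le: "cmod (RSQ_deriv t k \<theta>) \<le> RS_bound t k"
  using RS_deriv_energy[of t k \<theta>] by (rule norm_le_of_sum_squares_le; simp add: RS_bound_def)+

lemma RS_normalized_bound:
  assumes "cmod z \<le> RS_bound t k"
  shows "cmod (of_real (2 powr (- (real t + 1) / 2)) / of_real (RS_T t) ^ k * z) \<le> 2 powr (- 10 * real k)"
proof -
  have "cmod (of_real (2 powr (- (real t + 1) / 2)) / of_real (RS_T t) ^ k * z)
      \<le> 2 powr (- (real t + 1) / 2) / RS_T t ^ k * RS_bound t k"
    using assms by (simp add: norm_mult norm_divide norm_power RS_T_def divide_right_mono)
  also have "RS_T t ^ k = 2 ^ ((t + 10) * k)"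
    by (simp add: RS_T_def power_mult)
  also have "\<dots> = 2 powr real ((t + 10) * k)"
    by (rule powr_realpow[symmetric]) simp
  also have "2 powr (- (real t + 1) / 2) / \<dots> * RS_bound t k =
      2 powr (- (real t + 1) / 2 - real ((t + 10) * k) + (real k * real t + (real t + 1) / 2))"
    by (simp add: RS_bound_def powr_add powr_diff)
  also have "\<dots> = 2 powr (- 10 * real k)"
    by (rule arg_cong[where f = "(powr) 2"]) (simp add: field_simps)
  finally show ?thesis .
qed

theorem lemma3p6:
  fixes k t :: nat
  shows "(\<forall>\<theta>::real.
           norm (rderiv_iter k (\<lambda>\<theta>. RSP t (exp (\<i> * complex_of_real \<theta>))) \<theta>)
             \<le> 2 powr (real k * real t + (real t + 1) / 2)
         \<and> norm (rderiv_iter k (\<lambda>\<theta>. RSQ t (exp (\<i> * complex_of_real \<theta>))) \<theta>)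
             \<le> 2 powr (real k * real t + (real t + 1) / 2))
       \<and> (k \<ge> 1 \<longrightarrow> (\<forall>x::real.
           norm (rderiv_iter k (RS_alpha t) x) \<le> 2 powr (- 10 * real k)
         \<and> norm (rderiv_iter k (RS_beta t) x) \<le> 2 powr (- 10 * real k)))"
proof (intro conjI allI impI)
  fix \<theta> :: real
  show "norm (rderiv_iter k (\<lambda>\<theta>. RSP t (exp (\<i> * complex_of_real \<theta>))) \<theta>)
      \<le> 2 powr (real k * real t + (real t + 1) / 2)"
    unfolding rderiv_iter_RSP_circle RS_bound_def[symmetric] by (rule norm_RSP_deriv_le)
  show "norm (rderiv_iter k (\<lambda>\<theta>. RSQ t (exp (\<i> * complex_of_real \<theta>))) \<theta>)
      \<le> 2 powr (real k * real t + (real t + 1) / 2)"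
    unfolding rderiv_iter_RSQ_circle RS_bound_def[symmetric] by (rule norm_RSQ_deriv_le)
next
  fix x :: real
  show "norm (rderiv_iter k (RS_alpha t) x) \<le> 2 powr (- 10 * real k)"
    unfolding RS_alpha_def[abs_def] rderiv_iter_RSP_scaled by (intro RS_normalized_bound norm_RSP_deriv_le)
  show "norm (rderiv_iter k (RS_beta t) x) \<le> 2 powr (- 10 * real k)"
    unfolding RS_beta_def[abs_def] rderiv_iter_RSQ_scaled by (intro RS_normalized_bound norm_RSQ_deriv_le)
qed

end
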